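(* Let $m,n\ge r\ge1$, let $L:\mathbb{R}^{m\times n}\to\mathbb{R}$ be differentiable, let $\lambda>0$ and $\tau>0$. For $A\in\mathbb{R}^{m\times r}$, $B\in\mathbb{R}^{n\times r}$ set $\mathcal{L}_{L2}(A,B)=L(AB^\top)+\frac{\lambda}{2}\left(\|A\|_F^2+\|B\|_F^2\right)$ and $\mathcal{L}_*(AB^\top)=L(AB^\top)+\lambda\|AB^\top\|_*$. Let $(A(t),B(t))_{t\ge0}$ be a solution of the gradient flow $\tau\dot A=-\nabla_A\mathcal{L}_{L2}(A,B)$, $\tau\dot B=-\nabla_B\mathcal{L}_{L2}(A,B)$. If $\|A(t)\|_F$ and $\|B(t)\|_F$ remain bounded for all $t\ge0$, then $\left|\mathcal{L}_{L2}(A(t),B(t))-\mathcal{L}_*(A(t)B(t)^\top)\right|$ converges exponentially fast to $0$ as $t\to\infty$.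
   Context: $\|\cdot\|_F$ is the Frobenius norm and $\|W\|_*=\operatorname{Tr}(\sqrt{WW^\top})$ the nuclear norm (sum of singular values). "Converges exponentially fast to 0" means bounded by $Ce^{-ct}$ for some constants $C,c>0$. *)

theory Defs
  imports "HOL-Analysis.Analysis"
begin

text \<open>Matrices are elements of real^'c^'r (rows indexed by 'r, columns by 'c).
  The Euclidean norm / inner product on real^'c^'r are exactly the Frobenius
  norm / Frobenius inner product.\<close>

definition frob_norm :: "real^'c^'r \<Rightarrow> real" where
  "frob_norm M = sqrt (\<Sum>i\<in>UNIV. \<Sum>j\<in>UNIV. (M $ i $ j)^2)"

definition psd :: "real^'n^'n \<Rightarrow> bool" where
  "psd P \<longleftrightarrow> transpose P = P \<and> (\<forall>x. 0 \<le> x \<bullet> (P *v x))"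

definition msqrt :: "real^'n^'n \<Rightarrow> real^'n^'n" where
  "msqrt S = (THE P. psd P \<and> P ** P = S)"

definition nuclear_norm :: "real^'c^'r \<Rightarrow> real" where
  "nuclear_norm W = trace (msqrt (W ** transpose W))"

definition L_L2 :: "(real^'n^'m \<Rightarrow> real) \<Rightarrow> real \<Rightarrow> real^'r^'m \<Rightarrow> real^'r^'n \<Rightarrow> real" where
  "L_L2 L lam A B = L (A ** transpose B) + lam/2 * ((frob_norm A)^2 + (frob_norm B)^2)"

definition L_nuc :: "(real^'n^'m \<Rightarrow> real) \<Rightarrow> real \<Rightarrow> real^'n^'m \<Rightarrow> real" where
  "L_nuc L lam W = L W + lam * nuclear_norm W"

end

theory Submission
  imports Defs
begin

text \<open>Write \<open>W = A B\<^sup>T\<close> and \<open>D = A\<^sup>T A - B\<^sup>T B\<close>. Since \<open>|B|\<^sup>2 = |A|\<^sup>2 - tr D\<close>, the two losses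
  differ by \<open>\<lambda> tr (A A\<^sup>T - sqrt (W W\<^sup>T)) - \<lambda>/2 tr D\<close>. The loss term \<open>L(A B\<^sup>T)\<close> is invariant under
  \<open>(A, B) \<mapsto> (A G, B G\<^sup>-\<^sup>T)\<close>, so along the gradient flow only the regulariser moves \<open>D\<close>:
  \<open>\<tau> D' = -2 \<lambda> D\<close>, i.e. \<open>D(t) = exp (-2 \<lambda> t / \<tau>) D(0)\<close>. The psd matrices \<open>A A\<^sup>T\<close> and
  \<open>sqrt (W W\<^sup>T)\<close> have squares differing by \<open>A D A\<^sup>T\<close>, and for psd \<open>N, P\<close> every eigenvalue \<open>\<mu>\<close> of
  \<open>N - P\<close> satisfies \<open>\<mu>\<^sup>2 \<le> |N\<^sup>2 - P\<^sup>2|\<close>. Hence the first trace is \<open>O(|A| sqrt |D|)\<close>, which decays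
  like \<open>exp (-\<lambda> t / \<tau>)\<close> because \<open>A\<close> stays bounded.\<close>

section \<open>Matrix identities and Frobenius-norm estimates\<close>

lemma frob_norm_eq_norm: "frob_norm M = norm M"
  by (simp add: frob_norm_def norm_eq_sqrt_inner inner_vec_def power2_eq_square)

lemma matrix_add_rdistrib: "((A::real^'b^'a) + B) ** (C::real^'c^'b) = A ** C + B ** C"
  by (vector matrix_matrix_mult_def sum.distrib[symmetric] field_simps)

lemma matrix_diff_ldistrib: "(A::real^'b^'a) ** ((B::real^'c^'b) - C) = A ** B - A ** C"
  by (vector matrix_matrix_mult_def sum_subtractf[symmetric] field_simps)

lemma matrix_diff_rdistrib: "((A::real^'b^'a) - B) ** (C::real^'c^'b) = A ** C - B ** C"
  by (vector matrix_matrix_mult_def sum_subtractf[symmetric] field_simps)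

lemma transpose_diff: "transpose ((X::real^'c^'r) - Y) = transpose X - transpose Y"
  by (simp add: transpose_def vec_eq_iff)

lemma bounded_bilinear_matrix_mult:
  "bounded_bilinear ((**) :: real^'b^'a \<Rightarrow> real^'c^'b \<Rightarrow> real^'c^'a)"
  unfolding bilinear_conv_bounded_bilinear[symmetric] bilinear_def linear_iff
  by (simp add: matrix_add_ldistrib matrix_add_rdistrib matrix_scalar_ac scalar_matrix_assoc)

lemma bounded_linear_transpose: "bounded_linear (transpose :: real^'c^'r \<Rightarrow> real^'r^'c)"
  unfolding linear_conv_bounded_linear[symmetric] linear_iff
  by (simp add: transpose_def vec_eq_iff)

lemma inner_transpose: "transpose X \<bullet> transpose Y = (X::real^'c^'r) \<bullet> Y"
  by (simp add: inner_vec_def transpose_def sum.swap[of _ "UNIV::'r set"])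

lemma norm_transpose: "norm (transpose X) = norm (X::real^'c^'r)"
  by (simp add: norm_eq_sqrt_inner inner_transpose)

lemma inner_matrix_vector: "x \<bullet> ((M::real^'a^'b) *v y) = (transpose M *v x) \<bullet> y"
  by (metis dot_lmul_matrix transpose_matrix_vector)

lemma inner_transpose_matrix_mult:
  "(transpose X ** Y) \<bullet> (S::real^'c^'b) = (Y::real^'c^'a) \<bullet> ((X::real^'b^'a) ** S)"
  by (simp add: inner_vec_def matrix_matrix_mult_def transpose_def sum_distrib_left sum_distrib_right
      sum.swap[of _ "UNIV::'a set"] mult_ac)
    (rule sum.cong[OF refl], rule sum.swap)

lemma trace_mult_transpose: "trace (X ** transpose Y) = (X::real^'c^'r) \<bullet> Y"
  by (simp add: inner_vec_def trace_def matrix_matrix_mult_def transpose_def)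

lemma trace_transpose_mult: "trace (transpose X ** Y) = (X::real^'c^'r) \<bullet> Y"
  by (simp add: inner_vec_def trace_def matrix_matrix_mult_def transpose_def sum.swap[of _ "UNIV::'r set"])

lemma norm_matrix_vector_le: "norm ((M::real^'b^'a) *v x) \<le> norm M * norm x"
proof -
  have row: "(M $ i \<bullet> x)\<^sup>2 \<le> (norm (M $ i))\<^sup>2 * (norm x)\<^sup>2" for i
    using power_mono[OF Cauchy_Schwarz_ineq2[of "M $ i" x] abs_ge_zero, of 2]
    by (simp add: power_mult_distrib)
  have "(norm (M *v x))\<^sup>2 = (\<Sum>i\<in>UNIV. (M $ i \<bullet> x)\<^sup>2)"
    unfolding power2_norm_eq_inner inner_vec_def[of "M *v x"] matrix_vector_mul_component
    by (simp add: power2_eq_square)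
  also have "\<dots> \<le> (\<Sum>i\<in>UNIV. (norm (M $ i))\<^sup>2 * (norm x)\<^sup>2)"
    by (intro sum_mono row)
  also have "\<dots> = (norm M * norm x)\<^sup>2"
    unfolding norm_vec_def[of M] L2_set_def
    by (simp add: power_mult_distrib sum_distrib_right sum_nonneg)
  finally show ?thesis
    by (rule power2_le_imp_le) simp
qed

lemma abs_trace_le: "\<bar>trace (X::real^'n^'n)\<bar> \<le> CARD('n) * norm X"
proof -
  have "\<bar>trace X\<bar> \<le> (\<Sum>i\<in>UNIV. \<bar>X $ i $ i\<bar>)"
    by (simp add: trace_def sum_abs)
  also have "\<dots> \<le> (\<Sum>i\<in>(UNIV::'n set). norm X)"
    by (rule sum_mono, rule order_trans[OF component_le_norm_cart Finite_Cartesian_Product.norm_nth_le])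
  finally show ?thesis by simp
qed

section \<open>Spectral theorem and square roots of psd matrices\<close>

lemma quadratic_le_0_imp_linear_coeff_0:
  fixes a c :: real
  assumes "\<And>t. t * a + t\<^sup>2 * c \<le> 0"
  shows "a = 0"
proof (rule ccontr)
  assume "a \<noteq> 0"
  define t where "t = a / (\<bar>c\<bar> + 1)"
  have "t \<noteq> 0"
    using \<open>a \<noteq> 0\<close> by (simp add: t_def add_pos_nonneg)
  have a: "a = t * (\<bar>c\<bar> + 1)"
    by (simp add: t_def add_pos_nonneg)
  have "t * a + t\<^sup>2 * c = t\<^sup>2 * (\<bar>c\<bar> + 1 + c)"
    by (subst a) (simp add: power2_eq_square algebra_simps)
  also have "\<dots> > 0"
    using \<open>t \<noteq> 0\<close> by (intro mult_pos_pos) auto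
  finally show False
    using assms[of t] by simp
qed

lemma symmetric_inner_matrix_vector:
  "transpose M = M \<Longrightarrow> x \<bullet> ((M::real^'n^'n) *v y) = (M *v x) \<bullet> y"
  by (metis inner_matrix_vector)

lemma symmetric_matrix_eq_0_if_form_0:
  fixes M :: "real^'n^'n"
  assumes sym: "transpose M = M" and form: "\<And>x. x \<bullet> (M *v x) = 0"
  shows "M = 0"
proof -
  have "x \<bullet> (M *v y) = 0" for x y
  proof -
    have "(x + y) \<bullet> (M *v (x + y)) = 2 * (x \<bullet> (M *v y))"
      using form[of x] form[of y] symmetric_inner_matrix_vector[OF sym, of y x]
      by (simp add: matrix_vector_right_distrib inner_add_left inner_add_right inner_commute)
    then show ?thesis
      using form[of "x + y"] by simp
  qed
  then have "M *v y = 0 *v y" for y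
    by (metis inner_eq_zero_iff matrix_vector_mult_0)
  then show ?thesis
    by (simp add: matrix_eq)
qed

text \<open>Perturbing \<open>v\<close> along the residual \<open>u = M v - \<mu> v\<close> changes the Rayleigh quotient at first
  order by \<open>2 t (u \<bullet> u)\<close>, so maximality forces \<open>u = 0\<close>.\<close>
lemma symmetric_rayleigh_max_imp_eigenvector:
  fixes M :: "real^'n^'n"
  assumes sym: "transpose M = M" and V: "subspace V" and inv: "\<And>x. x \<in> V \<Longrightarrow> M *v x \<in> V"
    and v: "v \<in> V" "v \<bullet> v = 1"
    and max: "\<And>x. x \<in> V \<Longrightarrow> x \<bullet> (M *v x) \<le> (v \<bullet> (M *v v)) * (x \<bullet> x)"
  shows "M *v v = (v \<bullet> (M *v v)) *\<^sub>R v"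
proof -
  define \<mu> where "\<mu> = v \<bullet> (M *v v)"
  define u where "u = M *v v - \<mu> *\<^sub>R v"
  have uV: "u \<in> V"
    unfolding u_def using v inv V by (simp add: subspace_diff subspace_scale)
  have residual: "u \<bullet> (M *v v) - \<mu> * (u \<bullet> v) = u \<bullet> u"
    by (simp add: u_def inner_diff_left inner_diff_right algebra_simps)
  have "t * (2 * (u \<bullet> u)) + t\<^sup>2 * (u \<bullet> (M *v u) - \<mu> * (u \<bullet> u)) \<le> 0" for t
  proof -
    have "v + t *\<^sub>R u \<in> V"
      using v uV V by (simp add: subspace_add subspace_scale)
    from max[OF this] have
      "\<mu> + 2 * t * (u \<bullet> (M *v v)) + t\<^sup>2 * (u \<bullet> (M *v u))
         \<le> \<mu> * (1 + 2 * t * (u \<bullet> v) + t\<^sup>2 * (u \<bullet> u))"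
      using symmetric_inner_matrix_vector[OF sym, of v u] v(2)
      by (simp add: \<mu>_def matrix_vector_right_distrib matrix_vector_mult_scaleR inner_add_left
          inner_add_right inner_commute power2_eq_square algebra_simps)
    then show ?thesis
      using residual by (simp add: algebra_simps)
  qed
  then have "2 * (u \<bullet> u) = 0"
    by (rule quadratic_le_0_imp_linear_coeff_0)
  then show ?thesis
    by (simp add: u_def \<mu>_def)
qed

lemma symmetric_matrix_rayleigh_max_eigenvector:
  fixes M :: "real^'n^'n"
  assumes sym: "transpose M = M" and V: "subspace V" and inv: "\<And>x. x \<in> V \<Longrightarrow> M *v x \<in> V"
    and nonzero: "x0 \<in> V" "x0 \<noteq> 0"
  obtains v where "v \<in> V" "norm v = 1" "M *v v = (v \<bullet> (M *v v)) *\<^sub>R v"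
    "\<And>x. x \<in> V \<Longrightarrow> x \<bullet> (M *v x) \<le> (v \<bullet> (M *v v)) * (x \<bullet> x)"
proof -
  let ?K = "sphere 0 1 \<inter> V"
  have "compact ?K"
    by (simp add: V closed_subspace compact_Int_closed)
  moreover have "x0 /\<^sub>R norm x0 \<in> ?K"
    using nonzero V by (simp add: subspace_scale)
  moreover have "continuous_on ?K (\<lambda>x. x \<bullet> (M *v x))"
    by (intro continuous_intros)
  ultimately obtain v where vK: "v \<in> ?K" and vmax: "\<And>x. x \<in> ?K \<Longrightarrow> x \<bullet> (M *v x) \<le> v \<bullet> (M *v v)"
    using continuous_attains_sup[of ?K] by blast
  have max: "x \<bullet> (M *v x) \<le> (v \<bullet> (M *v v)) * (x \<bullet> x)" if "x \<in> V" for x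
  proof (cases "x = 0")
    case False
    have "x /\<^sub>R norm x \<in> ?K"
      using False that V by (simp add: subspace_scale)
    from vmax[OF this] have "(x \<bullet> (M *v x)) / (norm x)\<^sup>2 \<le> v \<bullet> (M *v v)"
      by (simp add: matrix_vector_mult_scaleR power2_eq_square divide_inverse mult_ac)
    then show ?thesis
      using False by (simp add: power2_norm_eq_inner divide_le_eq mult.commute)
  qed simp
  have "v \<in> V" "norm v = 1"
    using vK by auto
  moreover from this have "M *v v = (v \<bullet> (M *v v)) *\<^sub>R v"
    by (intro symmetric_rayleigh_max_imp_eigenvector[OF sym V inv _ _ max])
      (simp_all add: dot_square_norm)
  ultimately show ?thesis
    using max that by blast
qed

lemma eigenvectors_orthogonal_complement_invariant:
  fixes S :: "real^'n^'n"
  assumes sym: "transpose S = S" and eigen: "\<And>b. b \<in> B \<Longrightarrow> S *v b = (b \<bullet> (S *v b)) *\<^sub>R b"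
    and z: "\<And>b. b \<in> B \<Longrightarrow> orthogonal b z" and b: "b \<in> B"
  shows "orthogonal b (S *v z)"
proof -
  have "b \<bullet> (S *v z) = (b \<bullet> (S *v b)) * (b \<bullet> z)"
    by (metis symmetric_inner_matrix_vector[OF sym] eigen[OF b] inner_scaleR_left)
  then show ?thesis
    using z[OF b] by (simp add: orthogonal_def)
qed

lemma symmetric_matrix_eigenvector_orthogonal_to:
  fixes S :: "real^'n^'n"
  assumes sym: "transpose S = S" and span: "span B \<noteq> UNIV"
    and eigen: "\<And>b. b \<in> B \<Longrightarrow> S *v b = (b \<bullet> (S *v b)) *\<^sub>R b"
  obtains v where "norm v = 1" "S *v v = (v \<bullet> (S *v v)) *\<^sub>R v" "\<And>b. b \<in> B \<Longrightarrow> orthogonal b v"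
proof -
  obtain y where "y \<noteq> 0" and y_orth: "\<And>z. z \<in> span B \<Longrightarrow> orthogonal y z"
    using orthogonal_to_subspace_exists_gen[of B UNIV] span by auto
  define V where "V = {z. \<forall>b\<in>B. orthogonal b z}"
  have V: "subspace V"
    unfolding V_def by (rule subspace_orthogonal_to_vectors)
  have "y \<in> V"
    using y_orth span_base by (auto simp: V_def orthogonal_commute)
  moreover have "S *v z \<in> V" if "z \<in> V" for z
    using eigenvectors_orthogonal_complement_invariant[OF sym, of B z] eigen that
    by (auto simp: V_def)
  ultimately obtain v where "v \<in> V" "norm v = 1" "S *v v = (v \<bullet> (S *v v)) *\<^sub>R v"
    using symmetric_matrix_rayleigh_max_eigenvector[OF sym V, of y] \<open>y \<noteq> 0\<close> by metis
  then show ?thesis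
    by (intro that) (auto simp: V_def)
qed

lemma symmetric_matrix_orthonormal_eigenbasis:
  fixes S :: "real^'n^'n"
  assumes sym: "transpose S = S"
  obtains B where "pairwise orthogonal B" "span B = UNIV"
    "\<And>b. b \<in> B \<Longrightarrow> norm b = 1 \<and> S *v b = (b \<bullet> (S *v b)) *\<^sub>R b"
proof -
  define F where
    "F = {B. pairwise orthogonal B \<and> (\<forall>b\<in>B. norm b = 1 \<and> S *v b = (b \<bullet> (S *v b)) *\<^sub>R b)}"
  have card_F: "finite B \<and> card B \<le> DIM(real^'n)" if "B \<in> F" for B
  proof -
    have "0 \<notin> B"
      using that by (force simp: F_def)
    then have "independent B"
      using that pairwise_orthogonal_independent by (auto simp: F_def)
    then show ?thesis
      by (rule independent_bound)
  qed
  obtain B where BF: "B \<in> F" and Bmax: "\<And>B'. B' \<in> F \<Longrightarrow> card B' \<le> card B"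
    using ex_has_greatest_nat[of "\<lambda>B. B \<in> F" "{}" card "DIM(real^'n) + 1"] card_F
    by (force simp: F_def)
  have orth: "pairwise orthogonal B" and eigen: "\<And>b. b \<in> B \<Longrightarrow> norm b = 1 \<and> S *v b = (b \<bullet> (S *v b)) *\<^sub>R b"
    using BF by (auto simp: F_def)
  have "span B = UNIV"
  proof (rule ccontr)
    assume "span B \<noteq> UNIV"
    then obtain v where v: "norm v = 1" "S *v v = (v \<bullet> (S *v v)) *\<^sub>R v"
      and v_orth: "\<And>b. b \<in> B \<Longrightarrow> orthogonal b v"
      using symmetric_matrix_eigenvector_orthogonal_to[OF sym] eigen by blast
    then have "v \<notin> B"
      by (metis norm_zero orthogonal_self zero_neq_one)
    moreover have "insert v B \<in> F"
      using orth eigen v v_orth by (auto simp: F_def pairwise_insert orthogonal_commute)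
    ultimately show False
      using Bmax[of "insert v B"] card_F[OF BF] by simp
  qed
  then show ?thesis
    using that orth eigen by blast
qed

definition spectral_matrix :: "(real^'n) set \<Rightarrow> (real^'n \<Rightarrow> real) \<Rightarrow> real^'n^'n" where
  "spectral_matrix B f = (\<chi> i j. \<Sum>b\<in>B. f b * b $ i * b $ j)"

lemma spectral_matrix_vector: "spectral_matrix B f *v x = (\<Sum>b\<in>B. (f b * (b \<bullet> x)) *\<^sub>R b)"
  by (simp add: vec_eq_iff spectral_matrix_def matrix_vector_mult_def inner_vec_def sum_distrib_left
      sum_distrib_right sum.swap[of _ B] mult_ac)

lemma transpose_spectral_matrix: "transpose (spectral_matrix B f) = spectral_matrix B f"
  by (simp add: vec_eq_iff spectral_matrix_def transpose_def mult_ac)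

lemma orthonormal_spectral_matrix_eigen:
  assumes orth: "pairwise orthogonal B" and unit: "\<And>b. b \<in> B \<Longrightarrow> norm b = 1" and c: "c \<in> B"
  shows "spectral_matrix B f *v c = f c *\<^sub>R c"
proof -
  have "(\<Sum>b\<in>B. (f b * (b \<bullet> c)) *\<^sub>R b) = (\<Sum>b\<in>B. if b = c then f c *\<^sub>R c else 0)"
    using orth unit[OF c] c by (intro sum.cong) (auto simp: pairwise_def orthogonal_def dot_square_norm)
  then show ?thesis
    using pairwise_orthogonal_imp_finite[OF orth] c by (simp add: spectral_matrix_vector)
qed

lemma orthonormal_eigenbasis_imp_spectral_matrix:
  assumes orth: "pairwise orthogonal B" and span: "span B = UNIV"
    and unit: "\<And>b. b \<in> B \<Longrightarrow> norm b = 1" and eigen: "\<And>b. b \<in> B \<Longrightarrow> S *v b = f b *\<^sub>R b"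
  shows "S = spectral_matrix B f"
proof -
  have "S *v x = spectral_matrix B f *v x" for x
  proof -
    have "x = (\<Sum>b\<in>B. (x \<bullet> b) *\<^sub>R b)"
      using orthonormal_basis_expand[OF orth _ _ pairwise_orthogonal_imp_finite[OF orth]] span unit
      by auto
    then have "S *v x = (\<Sum>b\<in>B. (x \<bullet> b) *\<^sub>R (S *v b))"
      by (metis (no_types, lifting) matrix_vector_mult_scaleR linear_sum[OF matrix_vector_mul_linear]
          sum.cong comp_apply)
    then show ?thesis
      by (simp add: spectral_matrix_vector eigen inner_commute[of x] mult.commute cong: sum.cong)
  qed
  then show ?thesis
    by (simp add: matrix_eq)
qed

lemma psd_sqrt_exists:
  fixes S :: "real^'n^'n"
  assumes sym: "transpose S = S" and nonneg: "\<And>x. 0 \<le> x \<bullet> (S *v x)"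
  shows "\<exists>P. psd P \<and> P ** P = S"
proof -
  obtain B where orth: "pairwise orthogonal B" and span: "span B = UNIV"
    and eigen: "\<And>b. b \<in> B \<Longrightarrow> norm b = 1 \<and> S *v b = (b \<bullet> (S *v b)) *\<^sub>R b"
    using symmetric_matrix_orthonormal_eigenbasis[OF sym] by blast
  define \<mu> where "\<mu> b = b \<bullet> (S *v b)" for b
  define P where "P = spectral_matrix B (\<lambda>b. sqrt (\<mu> b))"
  have unit: "norm b = 1" and S_eigen: "S *v b = \<mu> b *\<^sub>R b" if "b \<in> B" for b
    using eigen[OF that] by (simp_all add: \<mu>_def)
  have P_eigen: "P *v b = sqrt (\<mu> b) *\<^sub>R b" if "b \<in> B" for b
    unfolding P_def using orth unit that by (rule orthonormal_spectral_matrix_eigen)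
  have "(P ** P) *v b = \<mu> b *\<^sub>R b" if "b \<in> B" for b
    using nonneg[of b] P_eigen[OF that]
    by (simp add: matrix_vector_mul_assoc[symmetric] matrix_vector_mult_scaleR \<mu>_def)
  then have "P ** P = S"
    using orthonormal_eigenbasis_imp_spectral_matrix[OF orth span unit]
      orthonormal_eigenbasis_imp_spectral_matrix[OF orth span unit S_eigen]
    by metis
  moreover have "x \<bullet> (P *v x) = (\<Sum>b\<in>B. sqrt (\<mu> b) * (b \<bullet> x)\<^sup>2)" for x
    by (simp add: P_def spectral_matrix_vector inner_sum_right inner_commute power2_eq_square mult.assoc)
  then have "psd P"
    using nonneg by (simp add: psd_def P_def transpose_spectral_matrix sum_nonneg \<mu>_def)
  ultimately show ?thesis
    by blast
qed

lemma psd_diff_eigenvalue_sq_le: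
  fixes N P :: "real^'n^'n"
  assumes N: "psd N" and P: "psd P" and v: "norm v = 1" and eigen: "(N - P) *v v = \<mu> *\<^sub>R v"
  shows "\<mu>\<^sup>2 \<le> \<bar>v \<bullet> ((N ** N - P ** P) *v v)\<bar>"
proof -
  have symN: "transpose N = N" and symP: "transpose P = P"
    and nN: "0 \<le> v \<bullet> (N *v v)" and nP: "0 \<le> v \<bullet> (P *v v)"
    using N P by (auto simp: psd_def)
  have vv: "v \<bullet> v = 1"
    using v by (simp add: dot_square_norm)
  have Nv: "N *v v = P *v v + \<mu> *\<^sub>R v"
    using eigen by (simp add: matrix_vector_mult_diff_rdistrib algebra_simps)
  have "v \<bullet> ((N ** N - P ** P) *v v) = (N *v v) \<bullet> (N *v v) - (P *v v) \<bullet> (P *v v)"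
    by (simp add: matrix_vector_mult_diff_rdistrib matrix_vector_mul_assoc[symmetric] inner_diff_right
        symmetric_inner_matrix_vector[OF symN, of v] symmetric_inner_matrix_vector[OF symP, of v])
  also have "\<dots> = \<mu> * (v \<bullet> (N *v v) + v \<bullet> (P *v v))"
    unfolding Nv using vv
    by (simp add: inner_add_left inner_add_right inner_commute algebra_simps)
  finally have form: "v \<bullet> ((N ** N - P ** P) *v v) = \<mu> * (v \<bullet> (N *v v) + v \<bullet> (P *v v))" .
  have "v \<bullet> (N *v v) = v \<bullet> (P *v v) + \<mu>"
    unfolding Nv using vv by (simp add: inner_add_right)
  then have "\<bar>\<mu>\<bar> \<le> v \<bullet> (N *v v) + v \<bullet> (P *v v)"
    using nN nP by linarith
  then have "\<mu>\<^sup>2 \<le> \<bar>\<mu>\<bar> * (v \<bullet> (N *v v) + v \<bullet> (P *v v))"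
    using mult_left_mono[OF _ abs_ge_zero[of \<mu>]] by (metis abs_mult_self_eq power2_eq_square)
  then show ?thesis
    unfolding form using nN nP by (simp add: abs_mult)
qed


lemma psd_diff_form_le_sqrt:
  fixes N P :: "real^'n^'n"
  assumes N: "psd N" and P: "psd P"
    and e: "\<And>x. \<bar>x \<bullet> ((N ** N - P ** P) *v x)\<bar> \<le> e * (x \<bullet> x)"
  shows "x \<bullet> ((N - P) *v x) \<le> sqrt e * (x \<bullet> x)"
proof -
  have sym: "transpose (N - P) = N - P"
    using N P by (simp add: psd_def transpose_diff)
  have nonzero: "axis undefined 1 \<noteq> (0::real^'n)"
    by (simp add: axis_eq_0_iff)
  obtain v where v: "norm v = 1" and eigen: "(N - P) *v v = (v \<bullet> ((N - P) *v v)) *\<^sub>R v"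
    and max: "\<And>x. x \<bullet> ((N - P) *v x) \<le> (v \<bullet> ((N - P) *v v)) * (x \<bullet> x)"
    by (rule symmetric_matrix_rayleigh_max_eigenvector[OF sym subspace_UNIV _ UNIV_I nonzero]) auto
  have "(v \<bullet> ((N - P) *v v))\<^sup>2 \<le> e"
    using psd_diff_eigenvalue_sq_le[OF N P v eigen] e[of v] v by (simp add: dot_square_norm)
  then have "v \<bullet> ((N - P) *v v) \<le> sqrt e"
    by (rule real_le_rsqrt)
  then have "(v \<bullet> ((N - P) *v v)) * (x \<bullet> x) \<le> sqrt e * (x \<bullet> x)"
    by (rule mult_right_mono) simp
  then show ?thesis
    using max[of x] by linarith
qed

lemma abs_psd_diff_form_le_sqrt:
  fixes N P :: "real^'n^'n"
  assumes N: "psd N" and P: "psd P"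
    and e: "\<And>x. \<bar>x \<bullet> ((N ** N - P ** P) *v x)\<bar> \<le> e * (x \<bullet> x)"
  shows "\<bar>x \<bullet> ((N - P) *v x)\<bar> \<le> sqrt e * (x \<bullet> x)"
proof -
  have swap: "y \<bullet> ((Q - R) *v y) = - (y \<bullet> ((R - Q) *v y))" for y and Q R :: "real^'n^'n"
    by (simp add: matrix_vector_mult_diff_rdistrib inner_diff_right)
  have "x \<bullet> ((N - P) *v x) \<le> sqrt e * (x \<bullet> x)"
    using psd_diff_form_le_sqrt[OF N P e] .
  moreover have "x \<bullet> ((P - N) *v x) \<le> sqrt e * (x \<bullet> x)"
    using psd_diff_form_le_sqrt[OF P N] e swap[of _ "P ** P" "N ** N"] by simp
  ultimately show ?thesis
    using swap[of x P N] by linarith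
qed

lemma psd_sqrt_unique:
  fixes N P :: "real^'n^'n"
  assumes N: "psd N" and P: "psd P" and eq: "N ** N = P ** P"
  shows "N = P"
proof -
  have "transpose (N - P) = N - P"
    using N P by (simp add: psd_def transpose_diff)
  moreover have "x \<bullet> ((N - P) *v x) = 0" for x
    using abs_psd_diff_form_le_sqrt[OF N P, of 0 x] eq by simp
  ultimately have "N - P = 0"
    by (rule symmetric_matrix_eq_0_if_form_0)
  then show ?thesis
    by simp
qed

lemma
  fixes S :: "real^'n^'n"
  assumes "transpose S = S" and "\<And>x. 0 \<le> x \<bullet> (S *v x)"
  shows psd_msqrt: "psd (msqrt S)" and msqrt_mult_self: "msqrt S ** msqrt S = S"
proof -
  have "\<exists>!P. psd P \<and> P ** P = S"
    using psd_sqrt_exists[OF assms] psd_sqrt_unique by metis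
  then have "psd (msqrt S) \<and> msqrt S ** msqrt S = S"
    unfolding msqrt_def by (rule theI')
  then show "psd (msqrt S)" "msqrt S ** msqrt S = S"
    by auto
qed

lemma abs_trace_psd_diff_le_sqrt:
  fixes N P :: "real^'n^'n"
  assumes N: "psd N" and P: "psd P"
    and e: "\<And>x. \<bar>x \<bullet> ((N ** N - P ** P) *v x)\<bar> \<le> e * (x \<bullet> x)"
  shows "\<bar>trace (N - P)\<bar> \<le> CARD('n) * sqrt e"
proof -
  have "axis i 1 \<bullet> ((N - P) *v axis i 1) = (N - P) $ i $ i" for i
    by (metis cart_eq_inner_axis inner_commute matrix_vector_mul_component)
  then have "\<bar>trace (N - P)\<bar> = \<bar>\<Sum>i\<in>UNIV. axis i 1 \<bullet> ((N - P) *v axis i 1)\<bar>"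
    by (simp add: trace_def)
  also have "\<dots> \<le> (\<Sum>i\<in>UNIV. \<bar>axis i 1 \<bullet> ((N - P) *v axis i 1)\<bar>)"
    by (rule sum_abs)
  also have "\<dots> \<le> (\<Sum>i\<in>(UNIV::'n set). sqrt e)"
  proof (rule sum_mono)
    fix i :: 'n
    show "\<bar>axis i 1 \<bullet> ((N - P) *v axis i 1)\<bar> \<le> sqrt e"
      using abs_psd_diff_form_le_sqrt[OF N P e, of "axis i 1"] by (simp add: inner_axis_axis)
  qed
  finally show ?thesis
    by simp
qed

section \<open>The gap between the two losses\<close>

lemma psd_mult_transpose: "psd ((X::real^'c^'r) ** transpose X)"
  unfolding psd_def
  by (simp add: matrix_transpose_mul matrix_vector_mul_assoc[symmetric] inner_matrix_vector[of _ X])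

lemma L_L2_minus_L_nuc:
  fixes L :: "real^'n^'m \<Rightarrow> real" and A :: "real^'r^'m" and B :: "real^'r^'n"
  shows "L_L2 L lam A B - L_nuc L lam (A ** transpose B)
    = lam * trace (A ** transpose A - msqrt ((A ** transpose B) ** transpose (A ** transpose B)))
      - lam / 2 * trace (transpose A ** A - transpose B ** B)"
  by (simp add: L_L2_def L_nuc_def nuclear_norm_def frob_norm_eq_norm power2_norm_eq_inner
      trace_sub trace_mult_transpose trace_transpose_mult algebra_simps)

lemma abs_form_congruence_le:
  fixes A :: "real^'r^'m" and D :: "real^'r^'r"
  shows "\<bar>x \<bullet> ((A ** D ** transpose A) *v x)\<bar> \<le> (norm D * (norm A)\<^sup>2) * (x \<bullet> x)"
proof -
  define y where "y = transpose A *v x"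
  have "\<bar>x \<bullet> ((A ** D ** transpose A) *v x)\<bar> = \<bar>y \<bullet> (D *v y)\<bar>"
    by (simp add: y_def matrix_vector_mul_assoc[symmetric] inner_matrix_vector[of x A])
  also have "\<dots> \<le> norm y * (norm D * norm y)"
    by (intro order.trans[OF Cauchy_Schwarz_ineq2] mult_left_mono norm_matrix_vector_le norm_ge_zero)
  also have "\<dots> = norm D * (norm y)\<^sup>2"
    by (simp add: power2_eq_square)
  also have "\<dots> \<le> norm D * (norm A * norm x)\<^sup>2"
    using norm_matrix_vector_le[of "transpose A" x]
    by (intro mult_left_mono power_mono) (simp_all add: y_def norm_transpose)
  finally show ?thesis
    by (simp add: power_mult_distrib power2_norm_eq_inner mult_ac)
qed

lemma abs_trace_gram_minus_msqrt_le:
  fixes A :: "real^'r^'m" and B :: "real^'r^'n"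
  defines "W \<equiv> A ** transpose B"
  shows "\<bar>trace (A ** transpose A - msqrt (W ** transpose W))\<bar>
    \<le> CARD('m) * (norm A * sqrt (norm (transpose A ** A - transpose B ** B)))"
proof -
  define D where "D = transpose A ** A - transpose B ** B"
  have W: "transpose (W ** transpose W) = W ** transpose W" "0 \<le> x \<bullet> ((W ** transpose W) *v x)" for x
    using psd_mult_transpose[of W] by (auto simp: psd_def)
  have "(A ** transpose A) ** (A ** transpose A) - msqrt (W ** transpose W) ** msqrt (W ** transpose W)
      = A ** D ** transpose A"
    unfolding msqrt_mult_self[OF W]
    by (simp add: W_def D_def matrix_diff_ldistrib matrix_diff_rdistrib matrix_transpose_mul
        matrix_mul_assoc)
  then have "\<bar>trace (A ** transpose A - msqrt (W ** transpose W))\<bar> \<le> CARD('m) * sqrt (norm D * (norm A)\<^sup>2)"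
    using abs_form_congruence_le[of _ A D]
    by (intro abs_trace_psd_diff_le_sqrt psd_mult_transpose psd_msqrt W) simp
  then show ?thesis
    by (simp add: D_def real_sqrt_mult mult_ac)
qed

lemma abs_L_L2_minus_L_nuc_le:
  fixes L :: "real^'n^'m \<Rightarrow> real" and A :: "real^'r^'m" and B :: "real^'r^'n"
  assumes lam: "0 \<le> lam" and A: "norm A \<le> M"
    and D: "norm (transpose A ** A - transpose B ** B) \<le> \<delta>\<^sup>2" and \<delta>: "0 \<le> \<delta>"
  shows "\<bar>L_L2 L lam A B - L_nuc L lam (A ** transpose B)\<bar> \<le> lam * CARD('m) * M * \<delta> + lam / 2 * CARD('r) * \<delta>\<^sup>2"
proof -
  let ?D = "transpose A ** A - transpose B ** B"
  have "\<bar>L_L2 L lam A B - L_nuc L lam (A ** transpose B)\<bar>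
      \<le> lam * \<bar>trace (A ** transpose A - msqrt ((A ** transpose B) ** transpose (A ** transpose B)))\<bar>
        + lam / 2 * \<bar>trace ?D\<bar>"
    unfolding L_L2_minus_L_nuc
    by (rule order_trans[OF abs_triangle_ineq4]) (simp add: abs_mult lam)
  also have "\<dots> \<le> lam * (CARD('m) * (norm A * sqrt (norm ?D))) + lam / 2 * (CARD('r) * norm ?D)"
    using lam abs_trace_gram_minus_msqrt_le[of A B] abs_trace_le[of ?D]
    by (intro add_mono mult_left_mono) auto
  also have "\<dots> \<le> lam * (CARD('m) * (M * \<delta>)) + lam / 2 * (CARD('r) * \<delta>\<^sup>2)"
    using lam A D \<delta> real_sqrt_le_mono[OF D] order_trans[OF norm_ge_zero A]
    by (intro add_mono mult_left_mono mult_mono) auto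
  finally show ?thesis
    by (simp add: mult_ac)
qed

section \<open>Balancedness along the gradient flow\<close>

lemma L_L2_partial_gradients:
  fixes L :: "real^'n^'m \<Rightarrow> real" and A GA :: "real^'r^'m" and B GB :: "real^'r^'n"
  assumes L: "(L has_derivative L') (at (A ** transpose B))"
    and GA: "((\<lambda>X. L_L2 L lam X B) has_derivative (\<lambda>H. GA \<bullet> H)) (at A)"
    and GB: "((\<lambda>Y. L_L2 L lam A Y) has_derivative (\<lambda>K. GB \<bullet> K)) (at B)"
  shows "GA \<bullet> H = L' (H ** transpose B) + lam * (A \<bullet> H)"
    and "GB \<bullet> K = L' (A ** transpose K) + lam * (B \<bullet> K)"
proof -
  have L_L2: "L_L2 L lam X Y = L (X ** transpose Y) + lam / 2 * (X \<bullet> X + Y \<bullet> Y)"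
    for X :: "real^'r^'m" and Y :: "real^'r^'n"
    by (simp add: L_L2_def frob_norm_eq_norm power2_norm_eq_inner)
  have "bounded_linear (\<lambda>X::real^'r^'m. X ** transpose B)"
    by (rule bounded_bilinear.bounded_linear_left[OF bounded_bilinear_matrix_mult])
  from has_derivative_compose[OF bounded_linear_imp_has_derivative[OF this] L]
  have "((\<lambda>X. L_L2 L lam X B) has_derivative (\<lambda>H. L' (H ** transpose B) + lam / 2 * (A \<bullet> H + H \<bullet> A))) (at A)"
    unfolding L_L2 by (auto intro!: derivative_eq_intros)
  from fun_cong[OF has_derivative_unique[OF GA this], of H]
  show "GA \<bullet> H = L' (H ** transpose B) + lam * (A \<bullet> H)"
    by (simp add: inner_commute[of H])
  have "bounded_linear (\<lambda>Y::real^'r^'n. A ** transpose Y)"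
    using bounded_linear_compose[OF bounded_bilinear.bounded_linear_right[OF bounded_bilinear_matrix_mult, of A]
        bounded_linear_transpose]
    by (simp add: o_def)
  from has_derivative_compose[OF bounded_linear_imp_has_derivative[OF this] L]
  have "((\<lambda>Y. L_L2 L lam A Y) has_derivative (\<lambda>K. L' (A ** transpose K) + lam / 2 * (B \<bullet> K + K \<bullet> B))) (at B)"
    unfolding L_L2 by (auto intro!: derivative_eq_intros)
  from fun_cong[OF has_derivative_unique[OF GB this], of K]
  show "GB \<bullet> K = L' (A ** transpose K) + lam * (B \<bullet> K)"
    by (simp add: inner_commute[of K])
qed

text \<open>Paired with any \<open>S\<close>, both \<open>A\<^sup>T G\<^sub>A\<close> and \<open>G\<^sub>B\<^sup>T B\<close> pick up the same loss contribution
  \<open>L'(A S B\<^sup>T)\<close>, so only the regulariser survives in their difference.\<close>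
lemma L_L2_gradient_balance:
  fixes L :: "real^'n^'m \<Rightarrow> real" and A GA :: "real^'r^'m" and B GB :: "real^'r^'n"
  assumes L: "L differentiable (at (A ** transpose B))"
    and GA: "((\<lambda>X. L_L2 L lam X B) has_derivative (\<lambda>H. GA \<bullet> H)) (at A)"
    and GB: "((\<lambda>Y. L_L2 L lam A Y) has_derivative (\<lambda>K. GB \<bullet> K)) (at B)"
  shows "transpose A ** GA - transpose GB ** B = lam *\<^sub>R (transpose A ** A - transpose B ** B)"
proof -
  obtain L' where L': "(L has_derivative L') (at (A ** transpose B))"
    using L by (auto simp: differentiable_def)
  note grad = L_L2_partial_gradients[OF L' GA GB]
  have transpose_inner: "X \<bullet> Y = transpose X \<bullet> transpose Y" for X Y :: "real^'r^'r"
    by (simp add: inner_transpose)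
  define Z where "Z = transpose A ** GA - transpose GB ** B - lam *\<^sub>R (transpose A ** A - transpose B ** B)"
  have "Z \<bullet> S = 0" for S
  proof -
    have "(transpose A ** GA) \<bullet> S = L' (A ** S ** transpose B) + lam * ((transpose A ** A) \<bullet> S)"
      by (simp add: inner_transpose_matrix_mult grad(1) matrix_mul_assoc)
    moreover have "(transpose GB ** B) \<bullet> S = L' (A ** S ** transpose B) + lam * ((transpose B ** B) \<bullet> S)"
      by (simp add: transpose_inner[of _ S] matrix_transpose_mul inner_transpose_matrix_mult grad(2)
          matrix_mul_assoc)
    ultimately show ?thesis
      by (simp add: Z_def inner_diff_left right_diff_distrib)
  qed
  from this[of Z] show ?thesis
    by (simp add: Z_def)
qed

lemma has_vector_derivative_scaleR_self_imp_exp: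
  fixes f :: "real \<Rightarrow> 'a::real_normed_vector"
  assumes f': "\<And>s. s \<ge> 0 \<Longrightarrow> (f has_vector_derivative c *\<^sub>R f s) (at s within {0..})"
    and t: "t \<ge> 0"
  shows "f t = exp (c * t) *\<^sub>R f 0"
proof -
  define g where "g s = exp (- c * s) *\<^sub>R f s" for s
  have "(g has_derivative (\<lambda>h. 0)) (at s within {0..})" if "s \<in> {0..}" for s
  proof -
    have "(g has_vector_derivative exp (- c * s) *\<^sub>R c *\<^sub>R f s + (- c * exp (- c * s)) *\<^sub>R f s)
        (at s within {0..})"
      unfolding g_def using that
      by (intro has_vector_derivative_scaleR f') (auto intro!: derivative_eq_intros)
    then show ?thesis
      by (simp add: has_vector_derivative_def algebra_simps)
  qed
  then obtain k where "\<And>s. s \<in> {0..} \<Longrightarrow> g s = k"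
    using has_derivative_zero_constant[OF convex_real_interval(1)] by blast
  then have "g t = f 0"
    using t by (metis atLeast_iff order_refl g_def exp_zero mult_zero_right scaleR_one)
  moreover have "f t = exp (c * t) *\<^sub>R g t"
    by (simp add: g_def exp_add[symmetric])
  ultimately show ?thesis
    by simp
qed


lemma gradient_flow_imbalance_decay:
  fixes A GA :: "real \<Rightarrow> real^'r^'m" and B GB :: "real \<Rightarrow> real^'r^'n"
  assumes tau: "\<tau> > 0"
    and flowA: "\<And>t. t \<ge> 0 \<Longrightarrow> (A has_vector_derivative (- (1/\<tau>) *\<^sub>R GA t)) (at t within {0..})"
    and flowB: "\<And>t. t \<ge> 0 \<Longrightarrow> (B has_vector_derivative (- (1/\<tau>) *\<^sub>R GB t)) (at t within {0..})"
    and balance: "\<And>t. t \<ge> 0 \<Longrightarrow> transpose (A t) ** GA t - transpose (GB t) ** B t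
                  = lam *\<^sub>R (transpose (A t) ** A t - transpose (B t) ** B t)"
    and t: "t \<ge> 0"
  shows "transpose (A t) ** A t - transpose (B t) ** B t
    = exp (- (2 * lam / \<tau>) * t) *\<^sub>R (transpose (A 0) ** A 0 - transpose (B 0) ** B 0)"
proof -
  define D where "D s = transpose (A s) ** A s - transpose (B s) ** B s" for s
  have gram': "((\<lambda>s. transpose (X s) ** X s) has_vector_derivative
      transpose (X s) ** X' + transpose X' ** X s) (at s within {0..})"
    if "(X has_vector_derivative X') (at s within {0..})" for X :: "real \<Rightarrow> real^'r^'c" and X' s
    using bounded_bilinear.has_vector_derivative[OF bounded_bilinear_matrix_mult
        bounded_linear.has_vector_derivative[OF bounded_linear_transpose that] that] .
  have "(D has_vector_derivative (- (2 * lam / \<tau>)) *\<^sub>R D s) (at s within {0..})" if s: "s \<ge> 0" for s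
  proof -
    let ?X = "transpose (A s) ** GA s - transpose (GB s) ** B s"
    have "transpose (D s) = D s"
      by (simp add: D_def transpose_diff matrix_transpose_mul)
    moreover have "?X = lam *\<^sub>R D s"
      using balance[OF s] by (simp add: D_def)
    ultimately have "?X + transpose ?X = (2 * lam) *\<^sub>R D s"
      by (metis transpose_scalar scaleR_2 scaleR_scaleR)
    moreover have "(transpose (A s) ** (c *\<^sub>R GA s) + transpose (c *\<^sub>R GA s) ** A s)
        - (transpose (B s) ** (c *\<^sub>R GB s) + transpose (c *\<^sub>R GB s) ** B s)
        = c *\<^sub>R (?X + transpose ?X)" for c
      by (simp add: transpose_diff matrix_transpose_mul transpose_scalar matrix_scalar_ac
          scalar_matrix_assoc[symmetric] algebra_simps)
    ultimately show ?thesis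
      using has_vector_derivative_diff[OF gram'[OF flowA[OF s]] gram'[OF flowB[OF s]]] tau
      by (simp add: D_def[abs_def] del: scaleR_minus_left)
  qed
  from has_vector_derivative_scaleR_self_imp_exp[OF this t] show ?thesis
    by (simp add: D_def)
qed

theorem theorem2:
  fixes L :: "real^'n^'m \<Rightarrow> real"
    and lam \<tau> :: real
    and A :: "real \<Rightarrow> real^'r^'m" and B :: "real \<Rightarrow> real^'r^'n"
    and GA :: "real \<Rightarrow> real^'r^'m" and GB :: "real \<Rightarrow> real^'r^'n"
  assumes dims: "CARD('r) \<le> CARD('m)" "CARD('r) \<le> CARD('n)"
    and L_diff: "\<And>X. L differentiable (at X)"
    and lam: "lam > 0" and tau: "\<tau> > 0"
    and GA: "\<And>t. t \<ge> 0 \<Longrightarrow>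
               ((\<lambda>X. L_L2 L lam X (B t)) has_derivative (\<lambda>H. GA t \<bullet> H)) (at (A t))"
    and GB: "\<And>t. t \<ge> 0 \<Longrightarrow>
               ((\<lambda>Y. L_L2 L lam (A t) Y) has_derivative (\<lambda>H. GB t \<bullet> H)) (at (B t))"
    and flowA: "\<And>t. t \<ge> 0 \<Longrightarrow> (A has_vector_derivative (- (1/\<tau>) *\<^sub>R GA t)) (at t within {0..})"
    and flowB: "\<And>t. t \<ge> 0 \<Longrightarrow> (B has_vector_derivative (- (1/\<tau>) *\<^sub>R GB t)) (at t within {0..})"
    and bounded: "\<exists>M. \<forall>t\<ge>0. frob_norm (A t) \<le> M \<and> frob_norm (B t) \<le> M"
  shows "\<exists>C c. C > 0 \<and> c > 0 \<and> (\<forall>t\<ge>0.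
           \<bar>L_L2 L lam (A t) (B t) - L_nuc L lam (A t ** transpose (B t))\<bar> \<le> C * exp (- c * t))"
proof -
  obtain M where M: "\<And>t. t \<ge> 0 \<Longrightarrow> norm (A t) \<le> M" and "0 \<le> M"
    using bounded by (metis frob_norm_eq_norm norm_ge_zero order.trans order_refl)
  define c where "c = lam / \<tau>"
  define d where "d = norm (transpose (A 0) ** A 0 - transpose (B 0) ** B 0)"
  define C where "C = lam * CARD('m) * M * sqrt d + lam / 2 * CARD('r) * d + 1"
  have balance: "transpose (A t) ** GA t - transpose (GB t) ** B t
      = lam *\<^sub>R (transpose (A t) ** A t - transpose (B t) ** B t)" if "t \<ge> 0" for t
    by (rule L_L2_gradient_balance[OF L_diff GA[OF that] GB[OF that]])
  have "\<bar>L_L2 L lam (A t) (B t) - L_nuc L lam (A t ** transpose (B t))\<bar> \<le> C * exp (- c * t)"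
    if t: "t \<ge> 0" for t
  proof -
    have "exp (- (2 * lam / \<tau>) * t) = (exp (- c * t))\<^sup>2"
      by (simp add: c_def power2_eq_square exp_add[symmetric])
    then have "norm (transpose (A t) ** A t - transpose (B t) ** B t) = (exp (- c * t) * sqrt d)\<^sup>2"
      using gradient_flow_imbalance_decay[OF tau flowA flowB balance t] by (simp add: d_def power_mult_distrib)
    from abs_L_L2_minus_L_nuc_le[where L = L, OF less_imp_le[OF lam] M[OF t] eq_refl[OF this]]
    have "\<bar>L_L2 L lam (A t) (B t) - L_nuc L lam (A t ** transpose (B t))\<bar>
        \<le> lam * CARD('m) * M * sqrt d * exp (- c * t) + lam / 2 * CARD('r) * d * (exp (- c * t))\<^sup>2"
      by (simp add: power_mult_distrib d_def mult_ac)
    also have "\<dots> \<le> lam * CARD('m) * M * sqrt d * exp (- c * t) + lam / 2 * CARD('r) * d * exp (- c * t)"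
      using lam tau t by (intro add_left_mono mult_left_mono) (auto simp: c_def d_def power2_eq_square)
    also have "\<dots> \<le> C * exp (- c * t)"
      by (simp add: C_def distrib_right)
    finally show ?thesis .
  qed
  moreover have "C > 0" "c > 0"
    unfolding C_def c_def using lam tau \<open>0 \<le> M\<close> by (simp_all add: d_def add_nonneg_pos)
  ultimately show ?thesis
    by blast
qed

end
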